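(* Let $N\ge 2$ be an integer and index rows and columns of $N\times N$ matrices by $0,1,\dots,N-1$. Let $H$ be the real tridiagonal $N\times N$ matrix with diagonal entries $H_{n,n}=2n-N+1$ for $n=0,\dots,N-1$, superdiagonal entries $H_{n-1,n}=\sqrt{n(N-n)}$ and subdiagonal entries $H_{n,n-1}=-\sqrt{n(N-n)}$ for $n=1,\dots,N-1$ (all other entries zero). Let $J$ be the $N\times N$ nilpotent Jordan block, $J_{n,n+1}=1$ for $n=0,\dots,N-2$ and all other entries zero. Define the diagonal matrices $C$, $F$ and the matrix $P$ by $$C_{n,n}=\sqrt{\binom{N-1}{n}},\qquad F_{n,n}=(-1)^{N-n-1}\,(N-1-n)!,\qquad P_{m,q}=\binom{N-1-m}{q}\quad (n,m,q=0,\dots,N-1),$$ with the convention $\binom{a}{b}=0$ for $b>a$. Then $Q:=C\,P\,F$ is invertible and satisfies $H\,Q=Q\,J$, i.e. $Q^{-1}HQ=J$.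
   Context: $H$ is the discrete anharmonic-oscillator Hamiltonian $H^{(N)}_{(AO)}(\lambda)$ at its exceptional point $\lambda=0$; $Q$ is called the transition matrix (it brings $H$ to the Jordan block with eigenvalue $0$). *)

theory Defs
  imports "Jordan_Normal_Form.Matrix" "Jordan_Normal_Form.Determinant" Complex_Main
begin

definition H_AO :: "nat \<Rightarrow> real mat" where
  "H_AO N = mat N N (\<lambda>(i, j).
     if i = j then 2 * real i - real N + 1
     else if j = i + 1 then sqrt (real j * (real N - real j))
     else if i = j + 1 then - sqrt (real i * (real N - real i))
     else 0)"

definition J_blk :: "nat \<Rightarrow> real mat" where
  "J_blk N = mat N N (\<lambda>(i, j). if j = i + 1 then 1 else 0)"

definition C_mat :: "nat \<Rightarrow> real mat" where
  "C_mat N = mat N N (\<lambda>(i, j). if i = j then sqrt (real ((N - 1) choose i)) else 0)"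

definition F_mat :: "nat \<Rightarrow> real mat" where
  "F_mat N = mat N N (\<lambda>(i, j). if i = j then (-1) ^ (N - i - 1) * fact (N - 1 - i) else 0)"

definition P_mat :: "nat \<Rightarrow> real mat" where
  "P_mat N = mat N N (\<lambda>(m, q). real ((N - 1 - m) choose q))"

definition Q_mat :: "nat \<Rightarrow> real mat" where
  "Q_mat N = C_mat N * P_mat N * F_mat N"

end

theory Submission
  imports Defs
begin

(*
  Because (n + 1) (N - 1 choose (n + 1)) = (N - 1 - n) (N - 1 choose n), conjugating H by
  the diagonal matrix C turns the off-diagonal entries sqrt (n (N - n)) and
  - sqrt (n (N - n)) into the integers N - n (above the diagonal) and - n (below it).
  With k = N - 1 - m, the three-term recurrence
    (m - k) (k choose q) + k (k - 1 choose q) - m (k + 1 choose q) = - (N - q) (k choose (q - 1))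
  says that this integer tridiagonal matrix maps column q of P to - (N - q) times column q - 1;
  the factorials and signs in F normalise these factors to 1, which yields the shift J.
  For invertibility, C and F are diagonal with nonzero entries and P is the Pascal matrix with
  its rows reversed.
*)

lemma carrier_mat_of_defs [simp]:
  "H_AO N \<in> carrier_mat N N" "J_blk N \<in> carrier_mat N N" "C_mat N \<in> carrier_mat N N"
  "P_mat N \<in> carrier_mat N N" "F_mat N \<in> carrier_mat N N"
  by (simp_all add: H_AO_def J_blk_def C_mat_def P_mat_def F_mat_def)

lemma Q_mat_carrier [simp]: "Q_mat N \<in> carrier_mat N N"
  unfolding Q_mat_def by (meson carrier_mat_of_defs mult_carrier_mat)

lemma index_mult_mat_sum:
  assumes "A \<in> carrier_mat n k" "B \<in> carrier_mat k m" "i < n" "j < m"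
  shows "(A * B) $$ (i, j) = (\<Sum>l = 0..<k. A $$ (i, l) * B $$ (l, j))"
  using assms by (simp add: scalar_prod_def)

lemma index_mult_tridiagonal:
  fixes T :: "'a::comm_semiring_1 mat"
  assumes "T \<in> carrier_mat n n" "A \<in> carrier_mat n p" "i < n" "j < p"
    and row: "\<And>k. k < n \<Longrightarrow> T $$ (i, k) =
      (if k = i then a else if k = Suc i then b else if Suc k = i then c else 0)"
  shows "(T * A) $$ (i, j) = a * A $$ (i, j)
    + (if Suc i < n then b * A $$ (Suc i, j) else 0)
    + (if 0 < i then c * A $$ (i - 1, j) else 0)" (is "_ = ?rhs")
proof -
  have "(T * A) $$ (i, j) = (\<Sum>k = 0..<n. T $$ (i, k) * A $$ (k, j))"
    using assms(1-4) by (rule index_mult_mat_sum)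
  also have "\<dots> = (\<Sum>k = 0..<n. (if k = i then a * A $$ (k, j) else 0)
      + (if k = Suc i then b * A $$ (k, j) else 0)
      + (if k = i - 1 \<and> 0 < i then c * A $$ (k, j) else 0))"
    using row by (intro sum.cong) auto
  also have "\<dots> = ?rhs"
    using assms(3) by (auto simp: sum.distrib)
  finally show ?thesis .
qed

lemma index_mult_J_blk:
  assumes "A \<in> carrier_mat m n" "i < m" "j < n"
  shows "(A * J_blk n) $$ (i, j) = (if 0 < j then A $$ (i, j - 1) else 0)"
proof -
  have "(A * J_blk n) $$ (i, j)
      = (\<Sum>k = 0..<n. if k = j - 1 \<and> 0 < j then A $$ (i, k) else 0)"
    using assms by (auto simp: scalar_prod_def J_blk_def intro!: sum.cong)
  also have "\<dots> = (if 0 < j then A $$ (i, j - 1) else 0)"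
    using assms(3) by simp
  finally show ?thesis .
qed

lemma det_mat_diag: "det (mat_diag n f :: 'a::comm_ring_1 mat) = (\<Prod>i = 0..<n. f i)"
proof -
  have "det (mat_diag n f) = prod_list (diag_mat (mat_diag n f))"
    by (rule det_lower_triangular[of n]) (simp_all add: mat_diag_def)
  then show ?thesis
    by (simp add: prod_list_diag_prod mat_diag_def)
qed

lemma invertible_mat_if_det_nonzero:
  assumes "A \<in> carrier_mat n n" "det A \<noteq> (0 :: 'a::field)"
  shows "invertible_mat A"
proof -
  from det_non_zero_imp_unit[OF assms, of "()"]
  obtain B where "B \<in> carrier_mat n n" "B * A = 1\<^sub>m n" "A * B = 1\<^sub>m n"
    unfolding Units_def ring_mat_def by auto
  with assms(1) show ?thesis
    unfolding invertible_mat_def inverts_mat_def square_mat.simps by auto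
qed

definition exchange_mat :: "nat \<Rightarrow> 'a::semiring_1 mat" where
  "exchange_mat n = mat n n (\<lambda>(i, j). if i + j = n - 1 then 1 else 0)"

definition pascal_mat :: "nat \<Rightarrow> 'a::semiring_1 mat" where
  "pascal_mat n = mat n n (\<lambda>(i, j). of_nat (i choose j))"

lemma exchange_mat_carrier [simp]: "exchange_mat n \<in> carrier_mat n n"
  by (simp add: exchange_mat_def)

lemma pascal_mat_carrier [simp]: "pascal_mat n \<in> carrier_mat n n"
  by (simp add: pascal_mat_def)

lemma exchange_mat_squared: "exchange_mat n * exchange_mat n = (1\<^sub>m n :: 'a::semiring_1 mat)"
proof (rule eq_matI)
  fix i j
  assume "i < dim_row (1\<^sub>m n :: 'a mat)" "j < dim_col (1\<^sub>m n :: 'a mat)"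
  then have ij: "i < n" "j < n" by simp_all
  then have "(exchange_mat n * exchange_mat n :: 'a mat) $$ (i, j)
      = (\<Sum>k = 0..<n. exchange_mat n $$ (i, k) * exchange_mat n $$ (k, j))"
    by (intro index_mult_mat_sum) (simp_all add: exchange_mat_def)
  also have "\<dots>
      = (\<Sum>k = 0..<n. if k = n - 1 - i then (if k + j = n - 1 then 1 else 0) else 0)"
    using ij by (intro sum.cong) (auto simp: exchange_mat_def)
  also have "\<dots> = (1\<^sub>m n :: 'a mat) $$ (i, j)"
    using ij by auto
  finally show "(exchange_mat n * exchange_mat n :: 'a mat) $$ (i, j) = 1\<^sub>m n $$ (i, j)" .
qed (simp_all add: exchange_mat_def)

lemma det_exchange_mat_nonzero: "det (exchange_mat n :: 'a::idom mat) \<noteq> 0"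
proof -
  have "det (exchange_mat n :: 'a mat) * det (exchange_mat n :: 'a mat)
      = det (exchange_mat n * exchange_mat n :: 'a mat)"
    by (rule det_mult[of _ n, symmetric]) (simp_all add: exchange_mat_def)
  also have "\<dots> = 1"
    by (simp add: exchange_mat_squared)
  finally have "det (exchange_mat n :: 'a mat) * det (exchange_mat n :: 'a mat) = 1" .
  then show ?thesis by auto
qed

lemma det_pascal_mat: "det (pascal_mat n :: 'a::comm_ring_1 mat) = 1"
proof -
  have "det (pascal_mat n :: 'a mat) = prod_list (diag_mat (pascal_mat n :: 'a mat))"
    by (rule det_lower_triangular[of n]) (simp_all add: pascal_mat_def binomial_eq_0)
  also have "\<dots> = 1"
    by (simp add: prod_list_diag_prod pascal_mat_def)
  finally show ?thesis .
qed

lemma of_nat_Suc_times_binomial: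
  "real (Suc j) * real (n choose Suc j) = (real n - real j) * real (n choose j)"
proof (cases "j \<le> n")
  case True
  have "Suc j * (n choose Suc j) = (n - j) * (n choose j)"
    by (metis binomial_absorb_comp binomial_absorption)
  then show ?thesis
    using True by (metis of_nat_diff of_nat_mult)
qed (simp add: binomial_eq_0)

lemma of_nat_times_binomial_pred:
  "real k * real ((k - 1) choose j) = (real k - real j) * real (k choose j)"
proof (cases "j \<le> k")
  case True
  then show ?thesis
    by (metis binomial_absorb_comp of_nat_diff of_nat_mult)
qed (simp add: binomial_eq_0)

lemma binomial_three_term:
  "(real m - real k) * real (k choose Suc p) + real k * real ((k - 1) choose Suc p)
     - real m * real (Suc k choose Suc p) = - (real m + real k - real p) * real (k choose p)"
  using of_nat_times_binomial_pred[of k "Suc p"] of_nat_Suc_times_binomial[of p k]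
  by (simp add: algebra_simps)

lemma sqrt_mult_balance:
  assumes "0 \<le> v" "u * a = v * b"
  shows "sqrt (u * v) * sqrt a = v * sqrt b"
proof -
  have "sqrt (u * v) * sqrt a = sqrt (v\<^sup>2 * b)"
    using assms(2) by (simp add: real_sqrt_mult[symmetric] power2_eq_square algebra_simps)
  also have "\<dots> = v * sqrt b"
    using assms(1) by (simp add: real_sqrt_mult)
  finally show ?thesis .
qed

lemma C_mat_eq_mat_diag: "C_mat N = mat_diag N (\<lambda>i. sqrt (real ((N - 1) choose i)))"
  by (simp add: C_mat_def mat_diag_def cong: if_cong)

definition F_diag :: "nat \<Rightarrow> nat \<Rightarrow> real" where
  "F_diag N q = (-1) ^ (N - q - 1) * fact (N - 1 - q)"

lemma F_mat_eq_mat_diag: "F_mat N = mat_diag N (F_diag N)"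
  by (simp add: F_mat_def mat_diag_def F_diag_def cong: if_cong)

lemma F_diag_pred:
  assumes "0 < q" "q < N"
  shows "F_diag N (q - 1) = - (real N - real q) * F_diag N q"
proof -
  obtain r where r: "N - q = Suc r" using assms(2) by (metis Suc_diff_Suc)
  then have "N - (q - 1) - 1 = Suc r" "N - 1 - (q - 1) = Suc r" "N - q - 1 = r" "N - 1 - q = r"
    "real N - real q = real (Suc r)"
    using assms by simp_all
  then show ?thesis by (simp add: F_diag_def algebra_simps)
qed

lemma P_mat_eq_exchange_pascal: "P_mat N = exchange_mat N * pascal_mat N"
proof (rule eq_matI)
  fix i j
  assume "i < dim_row (exchange_mat N * pascal_mat N :: real mat)"
    "j < dim_col (exchange_mat N * pascal_mat N :: real mat)"
  then have ij: "i < N" "j < N" by (simp_all add: exchange_mat_def pascal_mat_def)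
  then have "(exchange_mat N * pascal_mat N) $$ (i, j)
      = (\<Sum>k = 0..<N. exchange_mat N $$ (i, k) * pascal_mat N $$ (k, j))"
    by (intro index_mult_mat_sum) (simp_all add: exchange_mat_def pascal_mat_def)
  also have "\<dots> = (\<Sum>k = 0..<N. if k = N - 1 - i then real (k choose j) else 0)"
    using ij by (intro sum.cong) (auto simp: exchange_mat_def pascal_mat_def)
  also have "\<dots> = P_mat N $$ (i, j)"
    using ij by (simp add: P_mat_def)
  finally show "P_mat N $$ (i, j) = (exchange_mat N * pascal_mat N) $$ (i, j)" ..
qed (simp_all add: P_mat_def exchange_mat_def pascal_mat_def)

lemma det_Q_mat_nonzero: "det (Q_mat N) \<noteq> 0"
proof -
  have "det (C_mat N) \<noteq> 0"
    unfolding C_mat_eq_mat_diag det_mat_diag by auto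
  moreover have "det (F_mat N) \<noteq> 0"
    unfolding F_mat_eq_mat_diag det_mat_diag by (simp add: F_diag_def)
  moreover have "det (P_mat N) \<noteq> 0"
    unfolding P_mat_eq_exchange_pascal det_mult[OF exchange_mat_carrier pascal_mat_carrier]
    by (simp add: det_pascal_mat det_exchange_mat_nonzero)
  moreover have "det (Q_mat N) = det (C_mat N) * det (P_mat N) * det (F_mat N)"
  proof -
    have "C_mat N * P_mat N \<in> carrier_mat N N"
      by (meson carrier_mat_of_defs mult_carrier_mat)
    then show ?thesis
      unfolding Q_mat_def by (simp add: det_mult[of _ N])
  qed
  ultimately show ?thesis by simp
qed

definition H_AO_rescaled :: "nat \<Rightarrow> real mat" where
  "H_AO_rescaled N = mat N N (\<lambda>(i, j).
     if i = j then 2 * real i - real N + 1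
     else if j = i + 1 then real N - real j
     else if i = j + 1 then - real i
     else 0)"

lemma H_AO_rescaled_carrier [simp]: "H_AO_rescaled N \<in> carrier_mat N N"
  by (simp add: H_AO_rescaled_def)

lemma H_AO_entry_rescale:
  assumes "i < N" "j < N"
  shows "H_AO N $$ (i, j) * sqrt (real ((N - 1) choose j))
       = sqrt (real ((N - 1) choose i)) * H_AO_rescaled N $$ (i, j)"
proof -
  have weights: "real (Suc l) * real ((N - 1) choose Suc l)
      = (real N - real (Suc l)) * real ((N - 1) choose l)"
    if "Suc l < N" for l
    using that of_nat_Suc_times_binomial[of l "N - 1"] by simp
  consider (above) "j = Suc i" | (below) "i = Suc j" | (other) "j \<noteq> Suc i" "i \<noteq> Suc j"
    by blast
  then show ?thesis
  proof cases
    case above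
    then show ?thesis
      using assms sqrt_mult_balance[OF _ weights] by (simp add: H_AO_def H_AO_rescaled_def)
  next
    case below
    then have "(real N - real i) * real ((N - 1) choose j) = real i * real ((N - 1) choose i)"
      using assms weights[of j] by simp
    from sqrt_mult_balance[OF _ this] below assms show ?thesis
      by (simp add: H_AO_def H_AO_rescaled_def algebra_simps)
  qed (use assms in \<open>simp_all add: H_AO_def H_AO_rescaled_def\<close>)
qed

lemma H_AO_mult_C_mat: "H_AO N * C_mat N = C_mat N * H_AO_rescaled N"
proof -
  let ?c = "\<lambda>i. sqrt (real ((N - 1) choose i))"
  have "H_AO N * mat_diag N ?c = mat N N (\<lambda>(i, j). H_AO N $$ (i, j) * ?c j)"
    by (rule mat_diag_mult_right) (simp add: H_AO_def)
  also have "\<dots> = mat N N (\<lambda>(i, j). ?c i * H_AO_rescaled N $$ (i, j))"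
    by (rule cong_mat) (simp_all add: H_AO_entry_rescale del: One_nat_def)
  also have "\<dots> = mat_diag N ?c * H_AO_rescaled N"
    by (rule mat_diag_mult_left[symmetric]) (simp add: H_AO_rescaled_def)
  finally show ?thesis
    unfolding C_mat_eq_mat_diag .
qed

lemma P_mat_mult_F_mat:
  "P_mat N * F_mat N = mat N N (\<lambda>(m, q). real ((N - 1 - m) choose q) * F_diag N q)"
  unfolding F_mat_eq_mat_diag
  by (subst mat_diag_mult_right[of _ N]) (auto simp: P_mat_def)

lemma index_H_AO_rescaled_mult_P_F:
  assumes "m < N" "q < N"
  defines "k \<equiv> N - 1 - m"
  shows "(H_AO_rescaled N * (P_mat N * F_mat N)) $$ (m, q) = F_diag N q *
    ((real m - real k) * real (k choose q) + real k * real ((k - 1) choose q)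
      - real m * real (Suc k choose q))"
proof -
  let ?PF = "P_mat N * F_mat N"
  have k: "real k = real N - 1 - real m"
    using assms(1) unfolding k_def by simp
  have "(H_AO_rescaled N * ?PF) $$ (m, q) = (2 * real m - real N + 1) * ?PF $$ (m, q)
      + (if Suc m < N then (real N - real (Suc m)) * ?PF $$ (Suc m, q) else 0)
      + (if 0 < m then - real m * ?PF $$ (m - 1, q) else 0)"
    using assms by (intro index_mult_tridiagonal) (auto simp: H_AO_rescaled_def P_mat_mult_F_mat)
  moreover have "(if Suc m < N then (real N - real (Suc m)) * ?PF $$ (Suc m, q) else 0)
      = real k * real ((k - 1) choose q) * F_diag N q"
  proof (cases "Suc m < N")
    case True
    then have "N - 1 - Suc m = k - 1" "real N - real (Suc m) = real k"
      using k unfolding k_def by simp_all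
    with True assms(2) show ?thesis
      by (simp add: P_mat_mult_F_mat)
  qed (use assms in \<open>simp add: k_def\<close>)
  moreover have "(if 0 < m then - real m * ?PF $$ (m - 1, q) else 0)
      = - real m * real (Suc k choose q) * F_diag N q"
    using assms by (auto simp: P_mat_mult_F_mat Suc_diff_Suc)
  moreover have "?PF $$ (m, q) = real (k choose q) * F_diag N q"
    using assms by (simp add: P_mat_mult_F_mat)
  moreover have "real N = real m + real k + 1"
    using k by simp
  ultimately show ?thesis
    by (simp only:) (simp add: algebra_simps)
qed

lemma H_AO_rescaled_mult_P_F:
  "H_AO_rescaled N * (P_mat N * F_mat N) = P_mat N * F_mat N * J_blk N"
proof (rule eq_matI)
  let ?PF = "P_mat N * F_mat N"
  have PF: "?PF \<in> carrier_mat N N"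
    by (simp add: P_mat_mult_F_mat)
  fix m q
  assume "m < dim_row (?PF * J_blk N)" "q < dim_col (?PF * J_blk N)"
  then have mq: "m < N" "q < N"
    by (simp_all add: P_mat_def J_blk_def)
  define k where "k = N - 1 - m"
  have N: "real N = real m + real k + 1"
    using mq unfolding k_def by simp
  have "(if 0 < q then ?PF $$ (m, q - 1) else 0) = F_diag N q *
    ((real m - real k) * real (k choose q) + real k * real ((k - 1) choose q)
      - real m * real (Suc k choose q))"
  proof (cases q)
    case (Suc p)
    have "F_diag N p = - (real m + real k - real p) * F_diag N q"
      using F_diag_pred[of q N] mq Suc N by simp
    then have "?PF $$ (m, p) = F_diag N q * (- (real m + real k - real p) * real (k choose p))"
      using mq Suc by (simp add: P_mat_mult_F_mat k_def)
    then show ?thesis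
      unfolding Suc binomial_three_term by simp
  qed simp
  then show "(H_AO_rescaled N * ?PF) $$ (m, q) = (?PF * J_blk N) $$ (m, q)"
    using mq PF by (simp add: index_H_AO_rescaled_mult_P_F index_mult_J_blk k_def)
qed (simp_all add: H_AO_rescaled_def J_blk_def P_mat_def F_mat_def)

theorem mainTheorem2:
  fixes N :: nat
  assumes "N \<ge> 2"
  shows "invertible_mat (Q_mat N) \<and> H_AO N * Q_mat N = Q_mat N * J_blk N"
proof
  show "invertible_mat (Q_mat N)"
    by (rule invertible_mat_if_det_nonzero[OF Q_mat_carrier det_Q_mat_nonzero])
  have assoc: "A * B * D = A * (B * D)"
    if "A \<in> carrier_mat N N" "B \<in> carrier_mat N N" "D \<in> carrier_mat N N"
    for A B D :: "real mat"
    using that by (rule assoc_mult_mat)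
  have PF: "P_mat N * F_mat N \<in> carrier_mat N N"
    by (meson carrier_mat_of_defs mult_carrier_mat)
  have "H_AO N * Q_mat N = H_AO N * C_mat N * (P_mat N * F_mat N)"
    unfolding Q_mat_def using PF by (simp add: assoc)
  also have "\<dots> = C_mat N * (H_AO_rescaled N * (P_mat N * F_mat N))"
    unfolding H_AO_mult_C_mat using PF by (simp add: assoc)
  also have "\<dots> = Q_mat N * J_blk N"
    unfolding H_AO_rescaled_mult_P_F Q_mat_def using PF by (simp add: assoc)
  finally show "H_AO N * Q_mat N = Q_mat N * J_blk N" .
qed

end
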